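(* Assume that the hairpin completion $\mathcal{H}_k(L_1,L_2)$ is regular and that every state of the NFA $\mathcal{A}$ is reachable from an initial state and can reach a final state. Let $\kappa$ be a non-trivial strongly connected component of $\mathcal{A}$ with $N_\kappa$ states, let $A\in\kappa$ and let $A\xrightarrow{v_A}A$ be a path in $\kappa$ with $1\le|v_A|\le N_\kappa$, and let $A\xrightarrow{w}F$ be a path in $\mathcal{A}$ from $A$ to a final state $F$. Then $w$ is a prefix of some word in $v_A^+$. In addition, the word $v_A$ is uniquely determined by the conditions $A\xrightarrow{v_A}A$ and $1\le|v_A|\le N_\kappa$; the loop $A\xrightarrow{v_A}A$ visits every other state $B\in\kappa$ exactly once, so it forms a Hamiltonian cycle of $\kappa$, and $|v_A|=N_\kappa$.
   Context: $\Sigma$ is a finite alphabet with involution $a\mapsto\overline a$ (bijection, $\overline{\overline a}=a$), extended to words by $\overline{a_1\cdots a_m}=\overline{a_m}\cdots\overline{a_1}$ and to languages elementwise. $k\ge1$ is a fixed integer, $[k]=\{0,\dots,k\}$. $\mathcal{H}_k(L_1,L_2)=\{\gamma\alpha\beta\overline\alpha\overline\gamma: (\gamma\alpha\beta\overline\alpha\in L_1\text{ or }\alpha\beta\overline\alpha\overline\gamma\in L_2),\ |\alpha|=k\}$. $\mathcal{A}_1$ is a complete DFA accepting $L_1$ (states $\mathcal{Q}_1$, initial $q_{01}$, final $\mathcal{F}_1$); $\mathcal{A}_2$ a complete DFA accepting $\overline{L_2}$ (states $\mathcal{Q}_2$, initial $q_{02}$, final $\mathcal{F}_2$); $p\cdot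 w$ is the state reached from $p$ reading $w$. $\mathcal{Q}=\{(q_{01}\cdot w,q_{02}\cdot w): w\in\Sigma^*\}$, $P\cdot a=(p_1\cdot a,p_2\cdot a)$. A quadruple $(p_1,p_2,q_1,q_2)$ is a bridge if $\{\beta: p_1\cdot\beta=q_1,\ p_2\cdot\overline\beta=q_2\}\neq\emptyset$. The NFA $\mathcal{A}$ has states $((p_1,p_2),q_1,q_2,\ell)$ with $(p_1,p_2)\in\mathcal{Q}$, $\ell\in[k]$, $(p_1,p_2,q_1,q_2)$ a bridge; $a$-transitions (present when both endpoints are states): $(P,q_1\cdot\overline a,q_2\cdot\overline a,0)\xrightarrow{a}(P\cdot a,q_1,q_2,0)$ if $q_1\cdot\overline a\notin\mathcal{F}_1$ and $q_2\cdot\overline a\notin\mathcal{F}_2$; $(P,q_1\cdot\overline a,q_2\cdot\overline a,0)\xrightarrow{a}(P\cdot a,q_1,q_2,1)$ if $q_1\cdot\overline a\in\mathcal{F}_1$ or $q_2\cdot\overline a\in\mathcal{F}_2$; $(P,q_1\cdot\overline a,q_2\cdot\overline a,\ell)\xrightarrow{a}(P\cdot a,q_1,q_2,\ell+1)$ for $1\le\ell<k$. Initial states: $((q_{01},q_{02}),q_1',q_2',0)$; final states: all states at level $k$. A strongly connected component of $\mathcal{A}$ (as a directed graph) is non-trivial if it contains a path of length $\ge1$ from a state to itself. *)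

theory Defs
  imports Main "HOL-Library.Sublist"
begin

definition dstar :: "('q \<Rightarrow> 'a \<Rightarrow> 'q) \<Rightarrow> 'q \<Rightarrow> 'a list \<Rightarrow> 'q" where
  "dstar d p w = foldl d p w"

definition dlang :: "('q \<Rightarrow> 'a \<Rightarrow> 'q) \<Rightarrow> 'q \<Rightarrow> 'q set \<Rightarrow> 'a list set" where
  "dlang d q0 F = {w. dstar d q0 w \<in> F}"

definition wbar :: "('a \<Rightarrow> 'a) \<Rightarrow> 'a list \<Rightarrow> 'a list" where
  "wbar iv w = rev (map iv w)"

definition regular :: "'a list set \<Rightarrow> bool" where
  "regular L \<longleftrightarrow> (\<exists>(d :: nat \<Rightarrow> 'a \<Rightarrow> nat) q0 F Q.
      finite Q \<and> q0 \<in> Q \<and> (\<forall>q\<in>Q. \<forall>a. d q a \<in> Q) \<and> L = dlang d q0 F)"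

definition hairpin :: "('a \<Rightarrow> 'a) \<Rightarrow> nat \<Rightarrow> 'a list set \<Rightarrow> 'a list set \<Rightarrow> 'a list set" where
  "hairpin iv k L1 L2 = {\<gamma> @ \<alpha> @ \<beta> @ wbar iv \<alpha> @ wbar iv \<gamma> | \<gamma> \<alpha> \<beta>.
      length \<alpha> = k \<and> (\<gamma> @ \<alpha> @ \<beta> @ wbar iv \<alpha> \<in> L1 \<or> \<alpha> @ \<beta> @ wbar iv \<alpha> @ wbar iv \<gamma> \<in> L2)}"

definition qpairs :: "('q1 \<Rightarrow> 'a \<Rightarrow> 'q1) \<Rightarrow> 'q1 \<Rightarrow> ('q2 \<Rightarrow> 'a \<Rightarrow> 'q2) \<Rightarrow> 'q2 \<Rightarrow> ('q1 \<times> 'q2) set" where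
  "qpairs d1 q01 d2 q02 = {(dstar d1 q01 w, dstar d2 q02 w) | w. True}"

definition bridge :: "('a \<Rightarrow> 'a) \<Rightarrow> ('q1 \<Rightarrow> 'a \<Rightarrow> 'q1) \<Rightarrow> ('q2 \<Rightarrow> 'a \<Rightarrow> 'q2)
    \<Rightarrow> 'q1 \<Rightarrow> 'q2 \<Rightarrow> 'q1 \<Rightarrow> 'q2 \<Rightarrow> bool" where
  "bridge iv d1 d2 p1 p2 q1 q2 \<longleftrightarrow>
     (\<exists>\<beta>. dstar d1 p1 \<beta> = q1 \<and> dstar d2 p2 (wbar iv \<beta>) = q2)"

definition nstate :: "('a \<Rightarrow> 'a) \<Rightarrow> nat \<Rightarrow> ('q1 \<Rightarrow> 'a \<Rightarrow> 'q1) \<Rightarrow> 'q1 \<Rightarrow> ('q2 \<Rightarrow> 'a \<Rightarrow> 'q2) \<Rightarrow> 'q2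
    \<Rightarrow> ('q1 \<times> 'q2) \<times> 'q1 \<times> 'q2 \<times> nat \<Rightarrow> bool" where
  "nstate iv k d1 q01 d2 q02 S \<longleftrightarrow>
     (case S of (P, q1, q2, l) \<Rightarrow>
        P \<in> qpairs d1 q01 d2 q02 \<and> l \<le> k \<and> bridge iv d1 d2 (fst P) (snd P) q1 q2)"

definition ntrans :: "('a \<Rightarrow> 'a) \<Rightarrow> nat \<Rightarrow> ('q1 \<Rightarrow> 'a \<Rightarrow> 'q1) \<Rightarrow> 'q1 \<Rightarrow> 'q1 set
    \<Rightarrow> ('q2 \<Rightarrow> 'a \<Rightarrow> 'q2) \<Rightarrow> 'q2 \<Rightarrow> 'q2 set
    \<Rightarrow> ('q1 \<times> 'q2) \<times> 'q1 \<times> 'q2 \<times> nat \<Rightarrow> 'a \<Rightarrow> ('q1 \<times> 'q2) \<times> 'q1 \<times> 'q2 \<times> nat \<Rightarrow> bool" where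
  "ntrans iv k d1 q01 F1 d2 q02 F2 S a T \<longleftrightarrow>
     nstate iv k d1 q01 d2 q02 S \<and> nstate iv k d1 q01 d2 q02 T \<and>
     (case S of ((p1, p2), r1, r2, l) \<Rightarrow> case T of (P', q1, q2, l') \<Rightarrow>
        P' = (d1 p1 a, d2 p2 a) \<and> r1 = d1 q1 (iv a) \<and> r2 = d2 q2 (iv a) \<and>
        ((l = 0 \<and> l' = 0 \<and> r1 \<notin> F1 \<and> r2 \<notin> F2) \<or>
         (l = 0 \<and> l' = 1 \<and> (r1 \<in> F1 \<or> r2 \<in> F2)) \<or>
         (1 \<le> l \<and> l < k \<and> l' = l + 1)))"

definition ninit :: "('a \<Rightarrow> 'a) \<Rightarrow> nat \<Rightarrow> ('q1 \<Rightarrow> 'a \<Rightarrow> 'q1) \<Rightarrow> 'q1 \<Rightarrow> ('q2 \<Rightarrow> 'a \<Rightarrow> 'q2) \<Rightarrow> 'q2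
    \<Rightarrow> ('q1 \<times> 'q2) \<times> 'q1 \<times> 'q2 \<times> nat \<Rightarrow> bool" where
  "ninit iv k d1 q01 d2 q02 S \<longleftrightarrow> nstate iv k d1 q01 d2 q02 S \<and>
     (case S of (P, q1, q2, l) \<Rightarrow> P = (q01, q02) \<and> l = 0)"

definition nfinal :: "('a \<Rightarrow> 'a) \<Rightarrow> nat \<Rightarrow> ('q1 \<Rightarrow> 'a \<Rightarrow> 'q1) \<Rightarrow> 'q1 \<Rightarrow> ('q2 \<Rightarrow> 'a \<Rightarrow> 'q2) \<Rightarrow> 'q2
    \<Rightarrow> ('q1 \<times> 'q2) \<times> 'q1 \<times> 'q2 \<times> nat \<Rightarrow> bool" where
  "nfinal iv k d1 q01 d2 q02 S \<longleftrightarrow> nstate iv k d1 q01 d2 q02 S \<and>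
     (case S of (P, q1, q2, l) \<Rightarrow> l = k)"

definition nrun :: "('a \<Rightarrow> 'a) \<Rightarrow> nat \<Rightarrow> ('q1 \<Rightarrow> 'a \<Rightarrow> 'q1) \<Rightarrow> 'q1 \<Rightarrow> 'q1 set
    \<Rightarrow> ('q2 \<Rightarrow> 'a \<Rightarrow> 'q2) \<Rightarrow> 'q2 \<Rightarrow> 'q2 set
    \<Rightarrow> ('q1 \<times> 'q2) \<times> 'q1 \<times> 'q2 \<times> nat \<Rightarrow> 'a list
    \<Rightarrow> (('q1 \<times> 'q2) \<times> 'q1 \<times> 'q2 \<times> nat) list \<Rightarrow> ('q1 \<times> 'q2) \<times> 'q1 \<times> 'q2 \<times> nat \<Rightarrow> bool" where
  "nrun iv k d1 q01 F1 d2 q02 F2 S w ss T \<longleftrightarrow>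
     length ss = length w + 1 \<and> ss ! 0 = S \<and> ss ! length w = T \<and>
     (\<forall>i < length w. ntrans iv k d1 q01 F1 d2 q02 F2 (ss ! i) (w ! i) (ss ! Suc i))"

definition npath :: "('a \<Rightarrow> 'a) \<Rightarrow> nat \<Rightarrow> ('q1 \<Rightarrow> 'a \<Rightarrow> 'q1) \<Rightarrow> 'q1 \<Rightarrow> 'q1 set
    \<Rightarrow> ('q2 \<Rightarrow> 'a \<Rightarrow> 'q2) \<Rightarrow> 'q2 \<Rightarrow> 'q2 set
    \<Rightarrow> ('q1 \<times> 'q2) \<times> 'q1 \<times> 'q2 \<times> nat \<Rightarrow> 'a list \<Rightarrow> ('q1 \<times> 'q2) \<times> 'q1 \<times> 'q2 \<times> nat \<Rightarrow> bool" where
  "npath iv k d1 q01 F1 d2 q02 F2 S w T \<longleftrightarrow> (\<exists>ss. nrun iv k d1 q01 F1 d2 q02 F2 S w ss T)"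

definition nedges :: "('a \<Rightarrow> 'a) \<Rightarrow> nat \<Rightarrow> ('q1 \<Rightarrow> 'a \<Rightarrow> 'q1) \<Rightarrow> 'q1 \<Rightarrow> 'q1 set
    \<Rightarrow> ('q2 \<Rightarrow> 'a \<Rightarrow> 'q2) \<Rightarrow> 'q2 \<Rightarrow> 'q2 set
    \<Rightarrow> ((('q1 \<times> 'q2) \<times> 'q1 \<times> 'q2 \<times> nat) \<times> (('q1 \<times> 'q2) \<times> 'q1 \<times> 'q2 \<times> nat)) set" where
  "nedges iv k d1 q01 F1 d2 q02 F2 = {(S, T). \<exists>a. ntrans iv k d1 q01 F1 d2 q02 F2 S a T}"

definition nscc :: "('a \<Rightarrow> 'a) \<Rightarrow> nat \<Rightarrow> ('q1 \<Rightarrow> 'a \<Rightarrow> 'q1) \<Rightarrow> 'q1 \<Rightarrow> 'q1 set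
    \<Rightarrow> ('q2 \<Rightarrow> 'a \<Rightarrow> 'q2) \<Rightarrow> 'q2 \<Rightarrow> 'q2 set
    \<Rightarrow> (('q1 \<times> 'q2) \<times> 'q1 \<times> 'q2 \<times> nat) set \<Rightarrow> bool" where
  "nscc iv k d1 q01 F1 d2 q02 F2 K \<longleftrightarrow>
     (\<exists>S. nstate iv k d1 q01 d2 q02 S \<and>
        K = {T. nstate iv k d1 q01 d2 q02 T \<and>
                (S, T) \<in> (nedges iv k d1 q01 F1 d2 q02 F2)\<^sup>* \<and>
                (T, S) \<in> (nedges iv k d1 q01 F1 d2 q02 F2)\<^sup>*})"

definition nontrivial_scc :: "('a \<Rightarrow> 'a) \<Rightarrow> nat \<Rightarrow> ('q1 \<Rightarrow> 'a \<Rightarrow> 'q1) \<Rightarrow> 'q1 \<Rightarrow> 'q1 set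
    \<Rightarrow> ('q2 \<Rightarrow> 'a \<Rightarrow> 'q2) \<Rightarrow> 'q2 \<Rightarrow> 'q2 set
    \<Rightarrow> (('q1 \<times> 'q2) \<times> 'q1 \<times> 'q2 \<times> nat) set \<Rightarrow> bool" where
  "nontrivial_scc iv k d1 q01 F1 d2 q02 F2 K \<longleftrightarrow>
     nscc iv k d1 q01 F1 d2 q02 F2 K \<and>
     (\<exists>S\<in>K. (S, S) \<in> (nedges iv k d1 q01 F1 d2 q02 F2)\<^sup>+)"

end

theory Submission
  imports Defs
begin

text \<open>
  A loop \<open>A -z\<rightarrow> A\<close> forces level 0 at \<open>A\<close>. Cut a path \<open>A -w\<rightarrow> F\<close> to a final state
  as \<open>A -w\<^sub>1\<rightarrow> M -\<alpha>\<rightarrow> F\<close> with \<open>|\<alpha>| = k\<close>: then \<open>M\<close> is the last state of level 0, one of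
  its \<open>q\<close>-components is accepting, and on a path \<open>I -u z\<^sup>n w\<^sub>1\<rightarrow> M\<close> from an initial state
  the \<open>q\<close>-components, which are read backwards, never accept before \<open>M\<close>. With the bridge
  \<open>\<beta>\<close> of \<open>F\<close> this makes \<open>Y \<beta> wbar(Y)\<close> a hairpin word for \<open>Y = u z\<^sup>n w\<close>. Pumping the
  powers of \<open>z\<close> in the regular hairpin completion turns it into the hairpin word
  \<open>u z\<^bsup>n+e\<^esub> w \<beta> wbar(Y)\<close>, and the non-accepting backward readings exclude every
  factorisation \<open>\<gamma> \<alpha>' \<beta>' wbar(\<alpha>') wbar(\<gamma>)\<close> of it in which \<open>\<gamma>\<close> is shorter than \<open>u z\<^sup>n w\<^sub>1\<close>.
  Hence \<open>\<gamma> \<alpha>'\<close> begins with \<open>Y\<close>, i.e. \<open>w\<close> is a prefix of \<open>z\<^sup>e w\<close> and so of a power of \<open>z\<close>.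

  For \<open>A -x\<rightarrow> C -y\<rightarrow> A\<close> inside the component, the loop \<open>(x y)\<^bsup>|z|\<^esub>\<close> is therefore a
  power of \<open>z\<close>. A level-0 state is determined by what is read before it (forwards) and after
  it (backwards), so \<open>C\<close> is the state visited by the loop \<open>z\<close> at position \<open>|x| mod |z|\<close>:
  every loop at \<open>A\<close> visits the whole component, and the counting statements follow.
\<close>

lemma dstar_Nil [simp]: "dstar d p [] = p"
  by (simp add: dstar_def)

lemma dstar_Cons [simp]: "dstar d p (a # x) = dstar d (d p a) x"
  by (simp add: dstar_def)

lemma dstar_append [simp]: "dstar d p (x @ y) = dstar d (dstar d p x) y"
  by (simp add: dstar_def)

lemma dstar_concat_replicate: "dstar d p z = p \<Longrightarrow> dstar d p (concat (replicate n z)) = p"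
  by (induction n) auto

lemma dstar_closed: "q \<in> Q \<Longrightarrow> \<forall>q\<in>Q. \<forall>a. d q a \<in> Q \<Longrightarrow> dstar d q x \<in> Q"
  by (induction x arbitrary: q) auto

lemma wbar_Nil [simp]: "wbar iv [] = []"
  by (simp add: wbar_def)

lemma wbar_Cons [simp]: "wbar iv (a # x) = wbar iv x @ [iv a]"
  by (simp add: wbar_def)

lemma wbar_append [simp]: "wbar iv (x @ y) = wbar iv y @ wbar iv x"
  by (simp add: wbar_def)

lemma length_wbar [simp]: "length (wbar iv x) = length x"
  by (simp add: wbar_def)

lemma wbar_wbar [simp]: "\<forall>a. iv (iv a) = a \<Longrightarrow> wbar iv (wbar iv x) = x"
  by (induction x) auto

lemma wbar_drop: "wbar iv (drop i x) = take (length x - i) (wbar iv x)"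
  by (simp add: wbar_def rev_drop flip: drop_map)

lemma wbar_concat_replicate: "wbar iv (concat (replicate n z)) = concat (replicate n (wbar iv z))"
  by (simp add: wbar_def rev_concat map_concat)

lemma length_concat_replicate [simp]: "length (concat (replicate n z)) = n * length z"
  by (induction n) auto

lemma concat_replicate_mult:
  "concat (replicate m (concat (replicate n z))) = concat (replicate (m * n) z)"
  by (induction m) (auto simp: replicate_add)

lemma take_concat_replicate:
  "j \<le> m \<Longrightarrow> take (j * length z) (concat (replicate m z)) = concat (replicate j z)"
proof (induction j arbitrary: m)
  case (Suc j)
  then obtain m' where "m = Suc m'" by (cases m) auto
  with Suc show ?case by simp
qed simp

lemma prefix_concat_replicate_eq:
  assumes "prefix W (concat (replicate m z))" "length W = j * length z" "z \<noteq> []"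
  shows "W = concat (replicate j z)"
proof -
  have "j * length z \<le> m * length z"
    using prefix_length_le[OF assms(1)] assms(2) by simp
  then have "j \<le> m" using assms(3) by simp
  moreover have "W = take (length W) (concat (replicate m z))"
    using assms(1) by (metis prefix_def append_eq_conv_conj)
  ultimately show ?thesis using assms(2) take_concat_replicate by metis
qed

lemma prefix_concat_replicate_of_prefix_append:
  assumes "z \<noteq> []" "prefix w (z @ w)"
  shows "\<exists>m\<ge>1. prefix w (concat (replicate m z))"
  using assms(2)
proof (induction "length w" arbitrary: w rule: less_induct)
  case less
  from less.prems consider "prefix w z" | w' where "w = z @ w'" "prefix w' w"
    by (auto simp: prefix_append)
  then show ?case
  proof cases
    case 1 then show ?thesis by (intro exI[of _ 1]) simp
  next
    case 2
    then have "prefix w' (z @ w')" by simp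
    moreover have "length w' < length w" using 2 assms(1) by simp
    ultimately obtain m where "m \<ge> 1" "prefix w' (concat (replicate m z))"
      using less.hyps by blast
    then show ?thesis using 2 by (intro exI[of _ "Suc m"]) simp
  qed
qed

lemma dstar_take_concat_replicate:
  assumes "dstar d p z = p" "i \<le> n * length z" "z \<noteq> []"
  shows "dstar d p (take i (concat (replicate n z))) = dstar d p (take (i mod length z) z)"
  using assms(2)
proof (induction n arbitrary: i)
  case (Suc n)
  show ?case
  proof (cases "i < length z")
    case False
    then have "(i - length z) mod length z = i mod length z"
      by (simp add: le_mod_geq)
    with False Suc show ?thesis using assms(1) by simp
  qed simp
qed simp

lemma dstar_wbar_drop_concat_replicate:
  assumes "dstar d q (wbar iv z) = q" "i \<le> n * length z" "z \<noteq> []"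
  shows "dstar d q (wbar iv (drop i (concat (replicate n z))))
       = dstar d q (wbar iv (drop (i mod length z) z))"
  using assms(2)
proof (induction n arbitrary: i)
  case 0 then show ?case using assms(1) by simp
next
  case (Suc n)
  show ?case
  proof (cases "i < length z")
    case True
    then show ?thesis using assms(1) by (simp add: wbar_concat_replicate dstar_concat_replicate)
  next
    case False
    then have "(i - length z) mod length z = i mod length z"
      by (simp add: le_mod_geq)
    with False Suc show ?thesis by simp
  qed
qed

fun avoids :: "('q \<Rightarrow> 'a \<Rightarrow> 'q) \<Rightarrow> 'q set \<Rightarrow> 'q \<Rightarrow> 'a list \<Rightarrow> bool" where
  "avoids d Fs q [] \<longleftrightarrow> True"
| "avoids d Fs q (a # v) \<longleftrightarrow> d q a \<notin> Fs \<and> avoids d Fs (d q a) v"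

lemma avoids_append:
  "avoids d Fs q (u @ v) \<longleftrightarrow> avoids d Fs q u \<and> avoids d Fs (dstar d q u) v"
  by (induction u arbitrary: q) auto

lemma avoids_prefixD:
  "avoids d Fs q v \<Longrightarrow> prefix u v \<Longrightarrow> u \<noteq> [] \<Longrightarrow> dstar d q u \<notin> Fs"
proof (induction u arbitrary: q v)
  case (Cons a u)
  then obtain v' where "v = a # v'" "prefix u v'"
    by (cases v) auto
  with Cons show ?case by (cases u) auto
qed simp

lemma regular_pumping_concat_replicate:
  assumes "regular L"
  obtains n e where "0 < e"
    "\<And>s. u @ concat (replicate n z) @ s \<in> L \<longleftrightarrow> u @ concat (replicate (n + e) z) @ s \<in> L"
proof -
  obtain d :: "nat \<Rightarrow> 'a \<Rightarrow> nat" and q0 Fs Q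
    where Q: "finite Q" "q0 \<in> Q" "\<forall>q\<in>Q. \<forall>a. d q a \<in> Q" and L: "L = dlang d q0 Fs"
    using assms unfolding regular_def by (elim exE conjE) (rule that; assumption)
  define f where "f j = dstar d q0 (u @ concat (replicate j z))" for j
  have "\<not> inj_on f {..card Q}"
  proof
    assume inj: "inj_on f {..card Q}"
    have "f ` {..card Q} \<subseteq> Q"
      using dstar_closed[OF Q(2,3)] unfolding f_def by blast
    then have "card {..card Q} \<le> card Q"
      using card_inj_on_le[OF inj _ Q(1)] by blast
    then show False by simp
  qed
  then obtain x y where "x \<noteq> y" "f x = f y"
    unfolding inj_on_def by blast
  then obtain n n' where nn': "n < n'" "f n = f n'"
    by (metis linorder_neqE_nat)
  show ?thesis
  proof (rule that[of "n' - n" n])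
    fix s
    show "u @ concat (replicate n z) @ s \<in> L \<longleftrightarrow> u @ concat (replicate (n + (n' - n)) z) @ s \<in> L"
      using nn' by (simp add: L dlang_def f_def)
  qed (use nn' in simp)
qed

lemma hairpin_cut_rejected:
  assumes eq: "X @ wbar iv p = \<gamma> @ M @ wbar iv \<gamma>" and short: "length \<gamma> < length p"
    and safe: "avoids d Fs (dstar d q0 X) (wbar iv p)"
  shows "\<gamma> @ M \<notin> dlang d q0 Fs"
proof -
  define i where "i = length \<gamma>"
  have "wbar iv p = wbar iv (drop i p) @ wbar iv (take i p)"
    by (metis append_take_drop_id wbar_append)
  then have "(X @ wbar iv (drop i p)) @ wbar iv (take i p) = (\<gamma> @ M) @ wbar iv \<gamma>"
    using eq by simp
  moreover have "length (wbar iv (take i p)) = length (wbar iv \<gamma>)"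
    using short by (simp add: i_def)
  ultimately have "\<gamma> @ M = X @ take (length p - i) (wbar iv p)"
    by (simp add: wbar_drop del: append_assoc)
  moreover have "take (length p - i) (wbar iv p) \<noteq> []"
    using short by (auto simp: i_def wbar_def)
  ultimately show ?thesis
    using avoids_prefixD[OF safe take_is_prefix] by (simp add: dlang_def)
qed

lemma hairpin_memI:
  assumes inv: "\<forall>a. iv (iv a) = a" and "length \<alpha> = k"
    and "dstar d1 q01 (p @ \<alpha> @ \<beta> @ wbar iv \<alpha>) \<in> F1
      \<or> dstar d2 q02 (p @ \<alpha> @ wbar iv \<beta> @ wbar iv \<alpha>) \<in> F2"
  shows "p @ \<alpha> @ \<beta> @ wbar iv \<alpha> @ wbar iv p
    \<in> hairpin iv k (dlang d1 q01 F1) {u. wbar iv u \<in> dlang d2 q02 F2}"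
  unfolding hairpin_def using assms by (auto simp: dlang_def)

lemma hairpin_factorisation_long:
  assumes inv: "\<forall>a. iv (iv a) = a"
    and eq: "p' @ D @ wbar iv p = \<gamma> @ \<alpha> @ \<beta> @ wbar iv \<alpha> @ wbar iv \<gamma>"
    and mem: "\<gamma> @ \<alpha> @ \<beta> @ wbar iv \<alpha> \<in> dlang d1 q01 F1
      \<or> wbar iv (\<alpha> @ \<beta> @ wbar iv \<alpha> @ wbar iv \<gamma>) \<in> dlang d2 q02 F2"
    and safe1: "avoids d1 F1 (dstar d1 q01 (p' @ D)) (wbar iv p)"
    and safe2: "avoids d2 F2 (dstar d2 q02 (p @ wbar iv D)) (wbar iv p')"
    and "length p \<le> length p'"
  shows "length p \<le> length \<gamma>"
proof (rule ccontr)
  assume "\<not> ?thesis"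
  then have short: "length \<gamma> < length p" "length \<gamma> < length p'"
    using \<open>length p \<le> length p'\<close> by simp_all
  have "(p' @ D) @ wbar iv p = \<gamma> @ (\<alpha> @ \<beta> @ wbar iv \<alpha>) @ wbar iv \<gamma>"
    using eq by simp
  from hairpin_cut_rejected[OF this short(1) safe1]
  have "\<gamma> @ \<alpha> @ \<beta> @ wbar iv \<alpha> \<notin> dlang d1 q01 F1"
    by simp
  moreover have "(p @ wbar iv D) @ wbar iv p' = \<gamma> @ (\<alpha> @ wbar iv \<beta> @ wbar iv \<alpha>) @ wbar iv \<gamma>"
    using arg_cong[OF eq, of "wbar iv"] inv by simp
  from hairpin_cut_rejected[OF this short(2) safe2]
  have "wbar iv (\<alpha> @ \<beta> @ wbar iv \<alpha> @ wbar iv \<gamma>) \<notin> dlang d2 q02 F2"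
    using inv by simp
  ultimately show False
    using mem by blast
qed

lemma take_eq_of_wbar_suffix:
  assumes inv: "\<forall>a. iv (iv a) = a"
    and eq: "G @ M @ wbar iv G = X @ wbar iv Y" and long: "length Y \<le> length G"
  shows "take (length Y) G = Y"
proof -
  have "wbar iv G = wbar iv (drop (length Y) G) @ wbar iv (take (length Y) G)"
    by (metis append_take_drop_id wbar_append)
  then have "(G @ M @ wbar iv (drop (length Y) G)) @ wbar iv (take (length Y) G) = X @ wbar iv Y"
    using eq by simp
  moreover have "length (wbar iv (take (length Y) G)) = length (wbar iv Y)"
    using long by simp
  ultimately have "wbar iv (take (length Y) G) = wbar iv Y"
    using append_eq_append_conv by blast
  then show ?thesis by (metis inv wbar_wbar)
qed

abbreviation p1_of :: "('q1 \<times> 'q2) \<times> 'q1 \<times> 'q2 \<times> nat \<Rightarrow> 'q1" where "p1_of S \<equiv> fst (fst S)"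
abbreviation p2_of :: "('q1 \<times> 'q2) \<times> 'q1 \<times> 'q2 \<times> nat \<Rightarrow> 'q2" where "p2_of S \<equiv> snd (fst S)"
abbreviation q1_of :: "('q1 \<times> 'q2) \<times> 'q1 \<times> 'q2 \<times> nat \<Rightarrow> 'q1" where "q1_of S \<equiv> fst (snd S)"
abbreviation q2_of :: "('q1 \<times> 'q2) \<times> 'q1 \<times> 'q2 \<times> nat \<Rightarrow> 'q2" where "q2_of S \<equiv> fst (snd (snd S))"
abbreviation level_of :: "('q1 \<times> 'q2) \<times> 'q1 \<times> 'q2 \<times> nat \<Rightarrow> nat" where "level_of S \<equiv> snd (snd (snd S))"

locale hairpin_nfa =
  fixes iv :: "'a \<Rightarrow> 'a" and k :: nat
    and d1 :: "'q1 \<Rightarrow> 'a \<Rightarrow> 'q1" and q01 :: 'q1 and F1 :: "'q1 set"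
    and d2 :: "'q2 \<Rightarrow> 'a \<Rightarrow> 'q2" and q02 :: 'q2 and F2 :: "'q2 set"
begin

abbreviation "state \<equiv> nstate iv k d1 q01 d2 q02"
abbreviation "step \<equiv> ntrans iv k d1 q01 F1 d2 q02 F2"
abbreviation "run \<equiv> nrun iv k d1 q01 F1 d2 q02 F2"
abbreviation "path \<equiv> npath iv k d1 q01 F1 d2 q02 F2"

lemma step_components:
  assumes "step S a T"
  shows "p1_of T = d1 (p1_of S) a" "p2_of T = d2 (p2_of S) a"
    "q1_of S = d1 (q1_of T) (iv a)" "q2_of S = d2 (q2_of T) (iv a)"
  using assms by (auto simp: ntrans_def split: prod.splits)

lemma step_level:
  assumes "step S a T"
  shows "level_of S = 0 \<and> level_of T = 0 \<and> q1_of S \<notin> F1 \<and> q2_of S \<notin> F2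
    \<or> level_of S = 0 \<and> level_of T = 1 \<and> (q1_of S \<in> F1 \<or> q2_of S \<in> F2)
    \<or> 1 \<le> level_of S \<and> level_of S < k \<and> level_of T = level_of S + 1"
  using assms by (auto simp: ntrans_def split: prod.splits)

lemma run_Cons:
  "run S (a # x) (S' # ss) T \<longleftrightarrow> S' = S \<and> ss \<noteq> [] \<and> step S a (hd ss) \<and> run (hd ss) x ss T"
  by (cases ss) (auto simp: nrun_def All_less_Suc2)

lemma path_Nil [simp]: "path S [] T \<longleftrightarrow> S = T"
  by (auto simp: npath_def nrun_def intro: exI[of _ "[S]"])

lemma path_Cons: "path S (a # x) T \<longleftrightarrow> (\<exists>S'. step S a S' \<and> path S' x T)"
proof
  assume "path S (a # x) T"
  then obtain ss where "run S (a # x) ss T"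
    unfolding npath_def by blast
  moreover from this obtain S0 ss' where "ss = S0 # ss'"
    by (cases ss) (auto simp: nrun_def)
  ultimately show "\<exists>S'. step S a S' \<and> path S' x T"
    unfolding npath_def by (auto simp: run_Cons simp del: split_paired_Ex)
next
  assume "\<exists>S'. step S a S' \<and> path S' x T"
  then obtain S' ss where "step S a S'" "run S' x ss T"
    unfolding npath_def by blast
  moreover from this have "ss \<noteq> [] \<and> hd ss = S'"
    by (cases ss) (auto simp: nrun_def)
  ultimately have "run S (a # x) (S # ss) T"
    by (simp add: run_Cons)
  then show "path S (a # x) T"
    unfolding npath_def by blast
qed

lemma path_append: "path S (x @ y) T \<longleftrightarrow> (\<exists>M. path S x M \<and> path M y T)"
  by (induction x arbitrary: S) (auto simp: path_Cons simp del: split_paired_Ex)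

lemma path_concat_replicate: "path A x A \<Longrightarrow> path A (concat (replicate n x)) A"
  by (induction n) (auto simp: path_append simp del: split_paired_Ex)

lemma run_split:
  assumes "run S x ss T" "i \<le> length x"
  shows "path S (take i x) (ss ! i) \<and> path (ss ! i) (drop i x) T"
  using assms
proof (induction x arbitrary: S ss i)
  case Nil then show ?case by (auto simp: nrun_def)
next
  case (Cons a x)
  have "ss \<noteq> []"
    using Cons.prems(1) by (auto simp: nrun_def)
  then obtain ss' where ss: "ss = S # ss'" "ss' \<noteq> []" "step S a (hd ss')" "run (hd ss') x ss' T"
    using Cons.prems(1) by (cases ss) (auto simp: run_Cons)
  show ?case
  proof (cases i)
    case 0
    have "path (hd ss') x T"
      using ss(4) unfolding npath_def by blast
    with ss show ?thesis using 0 by (auto simp: path_Cons simp del: split_paired_Ex)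
  next
    case (Suc j)
    with Cons.IH[OF ss(4), of j] Cons.prems(2) ss show ?thesis
      by (auto simp: path_Cons hd_conv_nth nrun_def simp del: split_paired_Ex)
  qed
qed

lemma path_of_rtrancl_edges:
  "(S, T) \<in> (nedges iv k d1 q01 F1 d2 q02 F2)\<^sup>* \<Longrightarrow> \<exists>x. path S x T"
proof (induction rule: rtrancl_induct)
  case (step T U)
  then obtain x a where "path S x T" "step T a U"
    by (auto simp: nedges_def)
  then have "path S (x @ [a]) U"
    by (auto simp: path_append path_Cons simp del: split_paired_Ex)
  then show ?case by blast
qed (use path_Nil in blast)

lemma path_forward:
  "path S x T \<Longrightarrow> p1_of T = dstar d1 (p1_of S) x \<and> p2_of T = dstar d2 (p2_of S) x"
  by (induction x arbitrary: S) (auto simp: path_Cons dest: step_components)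

lemma path_backward:
  "path S x T \<Longrightarrow>
    q1_of S = dstar d1 (q1_of T) (wbar iv x) \<and> q2_of S = dstar d2 (q2_of T) (wbar iv x)"
  by (induction x arbitrary: S) (auto simp: path_Cons dest: step_components)

lemma path_level:
  "path S x T \<Longrightarrow> level_of S \<le> level_of T \<and> level_of T \<le> level_of S + length x
    \<and> (1 \<le> level_of S \<longrightarrow> level_of T = level_of S + length x)"
proof (induction x arbitrary: S)
  case (Cons a x)
  then obtain S' where "step S a S'" "path S' x T"
    by (auto simp: path_Cons simp del: split_paired_Ex)
  from step_level[OF this(1)] Cons.IH[OF this(2)] show ?case
    by (elim disjE conjE) auto
qed simp

lemma loop_level_zero: "path A z A \<Longrightarrow> z \<noteq> [] \<Longrightarrow> level_of A = 0"
  using path_level[of A z A] by auto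

lemma path_level_zero_avoids:
  "path S x T \<Longrightarrow> level_of T = 0 \<Longrightarrow>
    avoids d1 F1 (q1_of T) (wbar iv x) \<and> avoids d2 F2 (q2_of T) (wbar iv x)"
proof (induction x arbitrary: S)
  case (Cons a x)
  then obtain S' where step: "step S a S'" and path: "path S' x T"
    by (auto simp: path_Cons simp del: split_paired_Ex)
  have "level_of S' = 0"
    using path_level[OF path] Cons.prems(2) by simp
  then have "q1_of S \<notin> F1 \<and> q2_of S \<notin> F2"
    using step_level[OF step] by auto
  with Cons.IH[OF path Cons.prems(2)] path_backward[OF path] step_components[OF step]
  show ?case by (simp add: avoids_append)
qed simp

lemma path_through_state_eq:
  assumes "path S x T" "path T y U" "level_of U = 0"
  shows "T = ((dstar d1 (p1_of S) x, dstar d2 (p2_of S) x),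
              dstar d1 (q1_of U) (wbar iv y), dstar d2 (q2_of U) (wbar iv y), 0)"
  using path_forward[OF assms(1)] path_backward[OF assms(2)] path_level[OF assms(2)] assms(3)
  by (simp add: prod_eq_iff)

lemma path_bridge:
  assumes "path M x T" "state T"
  obtains \<beta> where "dstar d1 (p1_of M) (x @ \<beta> @ wbar iv x) = q1_of M"
    "dstar d2 (p2_of M) (x @ wbar iv \<beta> @ wbar iv x) = q2_of M"
proof -
  obtain \<beta> where "dstar d1 (p1_of T) \<beta> = q1_of T" "dstar d2 (p2_of T) (wbar iv \<beta>) = q2_of T"
    using assms(2) by (auto simp: nstate_def bridge_def split: prod.splits)
  with path_forward[OF assms(1)] path_backward[OF assms(1)] show ?thesis
    by (intro that[of \<beta>]) simp_all
qed

lemma final_path_split: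
  assumes k: "1 \<le> k" and path: "path A w F" and "level_of A = 0"
    and final: "nfinal iv k d1 q01 d2 q02 F"
  obtains w1 \<alpha> M where "w = w1 @ \<alpha>" "length \<alpha> = k" "path A w1 M" "path M \<alpha> F"
    "level_of M = 0" "q1_of M \<in> F1 \<or> q2_of M \<in> F2"
proof -
  have level_F: "level_of F = k"
    using final by (auto simp: nfinal_def split: prod.splits)
  then have "k \<le> length w"
    using path_level[OF path] \<open>level_of A = 0\<close> by simp
  then obtain w1 \<alpha> where w: "w = w1 @ \<alpha>" and len: "length \<alpha> = k"
    by (metis append_take_drop_id diff_diff_cancel length_drop)
  then obtain M where M: "path A w1 M" "path M \<alpha> F"
    using path by (auto simp: path_append simp del: split_paired_Ex)
  have level_M: "level_of M = 0"
    using path_level[OF M(2)] level_F len k by auto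
  obtain b \<alpha>' where "\<alpha> = b # \<alpha>'"
    using len k by (cases \<alpha>) auto
  then obtain M' where step: "step M b M'" and path': "path M' \<alpha>' F"
    using M(2) by (auto simp: path_Cons simp del: split_paired_Ex)
  have "level_of M' \<noteq> 0"
    using path_level[OF path'] level_F len \<open>\<alpha> = b # \<alpha>'\<close> by auto
  then have "q1_of M \<in> F1 \<or> q2_of M \<in> F2"
    using step_level[OF step] level_M by auto
  with w len M level_M show ?thesis by (rule that)
qed

lemma initial_path_level_zero:
  assumes "ninit iv k d1 q01 d2 q02 I" "path I x M" "level_of M = 0"
  shows "dstar d1 q01 x = p1_of M" "dstar d2 q02 x = p2_of M"
    "avoids d1 F1 (q1_of M) (wbar iv x)" "avoids d2 F2 (q2_of M) (wbar iv x)"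
proof -
  have "fst I = (q01, q02)"
    using assms(1) by (auto simp: ninit_def split: prod.splits)
  with path_forward[OF assms(2)] path_level_zero_avoids[OF assms(2,3)]
  show "dstar d1 q01 x = p1_of M" "dstar d2 q02 x = p2_of M"
    "avoids d1 F1 (q1_of M) (wbar iv x)" "avoids d2 F2 (q2_of M) (wbar iv x)"
    by auto
qed

lemma loop_power_state_eq:
  assumes loop: "run A z ts A" "z \<noteq> []"
    and x: "path A x C" and y: "path C y A" and xy: "x @ y = concat (replicate J z)"
  shows "C = ts ! (length x mod length z)"
proof -
  define r where "r = length x mod length z"
  have r: "r < length z"
    using loop(2) by (simp add: r_def)
  have loop_path: "path A z A"
    using loop(1) unfolding npath_def by blast
  have level_A: "level_of A = 0"
    using loop_level_zero[OF loop_path loop(2)] .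
  have fix_z: "dstar d1 (p1_of A) z = p1_of A" "dstar d2 (p2_of A) z = p2_of A"
    "dstar d1 (q1_of A) (wbar iv z) = q1_of A" "dstar d2 (q2_of A) (wbar iv z) = q2_of A"
    using path_forward[OF loop_path] path_backward[OF loop_path] by simp_all
  have x_eq: "x = take (length x) (concat (replicate J z))"
    and y_eq: "y = drop (length x) (concat (replicate J z))"
    and len_x: "length x \<le> J * length z"
    using xy unfolding append_eq_conv_conj by (auto dest: arg_cong[of _ _ length])
  have "dstar d1 (p1_of A) x = dstar d1 (p1_of A) (take r z)"
    "dstar d2 (p2_of A) x = dstar d2 (p2_of A) (take r z)"
    "dstar d1 (q1_of A) (wbar iv y) = dstar d1 (q1_of A) (wbar iv (drop r z))"
    "dstar d2 (q2_of A) (wbar iv y) = dstar d2 (q2_of A) (wbar iv (drop r z))"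
    unfolding r_def
    using dstar_take_concat_replicate[OF fix_z(1) len_x loop(2), folded x_eq]
      dstar_take_concat_replicate[OF fix_z(2) len_x loop(2), folded x_eq]
      dstar_wbar_drop_concat_replicate[OF fix_z(3) len_x loop(2), folded y_eq]
      dstar_wbar_drop_concat_replicate[OF fix_z(4) len_x loop(2), folded y_eq]
    by simp_all
  moreover have "ts ! r = ((dstar d1 (p1_of A) (take r z), dstar d2 (p2_of A) (take r z)),
      dstar d1 (q1_of A) (wbar iv (drop r z)), dstar d2 (q2_of A) (wbar iv (drop r z)), 0)"
    using run_split[OF loop(1)] r path_through_state_eq level_A by auto
  ultimately show ?thesis
    using path_through_state_eq[OF x y level_A] by (simp add: r_def)
qed

end

locale regular_trim_hairpin = hairpin_nfa iv k d1 q01 F1 d2 q02 F2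
  for iv :: "'a \<Rightarrow> 'a" and k :: nat
    and d1 :: "'q1 \<Rightarrow> 'a \<Rightarrow> 'q1" and q01 :: 'q1 and F1 :: "'q1 set"
    and d2 :: "'q2 \<Rightarrow> 'a \<Rightarrow> 'q2" and q02 :: 'q2 and F2 :: "'q2 set" +
  assumes involution: "\<forall>a. iv (iv a) = a"
    and k_pos: "1 \<le> k"
    and regular_hairpin: "regular (hairpin iv k (dlang d1 q01 F1) {u. wbar iv u \<in> dlang d2 q02 F2})"
    and trim: "\<forall>S. nstate iv k d1 q01 d2 q02 S \<longrightarrow>
                 (\<exists>I u. ninit iv k d1 q01 d2 q02 I \<and> npath iv k d1 q01 F1 d2 q02 F2 I u S) \<and>
                 (\<exists>G u. nfinal iv k d1 q01 d2 q02 G \<and> npath iv k d1 q01 F1 d2 q02 F2 S u G)"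
begin

abbreviation "hairpin_completion \<equiv> hairpin iv k (dlang d1 q01 F1) {u. wbar iv u \<in> dlang d2 q02 F2}"

lemma final_path_prefix_of_loop_power:
  assumes A: "state A" and loop: "path A z A" "z \<noteq> []"
    and path: "path A w F" and final: "nfinal iv k d1 q01 d2 q02 F"
  shows "\<exists>m\<ge>1. prefix w (concat (replicate m z))"
proof -
  have "level_of A = 0"
    using loop_level_zero loop by blast
  then obtain w1 \<alpha> M where w: "w = w1 @ \<alpha>" "length \<alpha> = k" "path A w1 M" "path M \<alpha> F"
    and level_M: "level_of M = 0" and hit: "q1_of M \<in> F1 \<or> q2_of M \<in> F2"
    using final_path_split[OF k_pos path _ final] by blast
  have "state F"
    using final by (simp add: nfinal_def)
  then obtain \<beta> where \<beta>: "dstar d1 (p1_of M) (\<alpha> @ \<beta> @ wbar iv \<alpha>) = q1_of M"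
    "dstar d2 (p2_of M) (\<alpha> @ wbar iv \<beta> @ wbar iv \<alpha>) = q2_of M"
    using path_bridge[OF w(4)] by blast
  define D where "D = \<alpha> @ \<beta> @ wbar iv \<alpha>"
  obtain I u where I: "ninit iv k d1 q01 d2 q02 I" "path I u A"
    using trim A by blast
  define pre where "pre j = u @ concat (replicate j z) @ w1" for j
  have "path I (pre j) M" for j
    using I(2) path_concat_replicate[OF loop(1)] w(3)
    by (auto simp: pre_def path_append simp del: split_paired_Ex)
  note pre = initial_path_level_zero[OF I(1) this level_M]
  obtain n e where e: "0 < e" and pump: "\<And>s. u @ concat (replicate n z) @ s \<in> hairpin_completion
      \<longleftrightarrow> u @ concat (replicate (n + e) z) @ s \<in> hairpin_completion"
    using regular_pumping_concat_replicate[OF regular_hairpin] by blast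
  have "pre n @ D @ wbar iv (pre n) \<in> hairpin_completion"
    unfolding D_def append.assoc by (rule hairpin_memI[OF involution w(2)]) (use hit pre \<beta> in simp)
  then have "pre (n + e) @ D @ wbar iv (pre n) \<in> hairpin_completion"
    using pump by (simp add: pre_def)
  then obtain \<gamma> \<alpha>' \<beta>' where
    Z: "pre (n + e) @ D @ wbar iv (pre n) = \<gamma> @ \<alpha>' @ \<beta>' @ wbar iv \<alpha>' @ wbar iv \<gamma>"
    and len_\<alpha>': "length \<alpha>' = k"
    and mem: "\<gamma> @ \<alpha>' @ \<beta>' @ wbar iv \<alpha>' \<in> dlang d1 q01 F1
      \<or> wbar iv (\<alpha>' @ \<beta>' @ wbar iv \<alpha>' @ wbar iv \<gamma>) \<in> dlang d2 q02 F2"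
    unfolding hairpin_def by auto
  have "length (pre n) \<le> length \<gamma>"
    using hairpin_factorisation_long[OF involution Z mem] pre \<beta> involution
    by (simp add: D_def pre_def add_mult_distrib)
  then have "take (length (pre n @ \<alpha>)) (\<gamma> @ \<alpha>') = pre n @ \<alpha>"
    using take_eq_of_wbar_suffix[OF involution, of "\<gamma> @ \<alpha>'" \<beta>' "pre (n + e) @ \<alpha> @ \<beta>" "pre n @ \<alpha>"]
      Z len_\<alpha>' w(2) by (simp add: D_def)
  then have "prefix (pre n @ \<alpha>) (pre (n + e) @ D @ wbar iv (pre n))"
    unfolding Z by (metis append.assoc prefix_append take_is_prefix)
  then have "prefix w (concat (replicate e z) @ w @ \<beta> @ wbar iv (pre n @ \<alpha>))"
    by (simp add: D_def pre_def w(1) replicate_add)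
  then have "prefix w (concat (replicate e z) @ w)"
    by (rule prefix_length_prefix) simp_all
  moreover have "concat (replicate e z) \<noteq> []"
    using e loop(2) by (simp flip: length_greater_0_conv)
  ultimately obtain m where "m \<ge> 1" "prefix w (concat (replicate (m * e) z))"
    using prefix_concat_replicate_of_prefix_append by (metis concat_replicate_mult)
  with e show ?thesis
    by (intro exI[of _ "m * e"]) simp
qed

lemma loop_through_state_power:
  assumes A: "state A" and loop: "path A z A" "z \<noteq> []"
    and x: "path A x C" and y: "path C y A"
  obtains y' where "path C y' A" "x @ y' = concat (replicate (length (x @ y)) z)"
proof -
  \<comment> \<open>\<open>(x y)\<^bsup>|z|\<^esub>\<close> has length divisible by \<open>|z|\<close>, so as a prefix of a power of \<open>z\<close> it is one\<close>
  define y' where "y' = y @ concat (replicate (length z - 1) (x @ y))"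
  have xy': "x @ y' = concat (replicate (length z) (x @ y))"
    using loop(2) by (cases "length z") (simp_all add: y'_def)
  have y': "path C y' A"
    using y path_concat_replicate[of A "x @ y"] x
    by (auto simp: y'_def path_append simp del: split_paired_Ex)
  obtain G w0 where "nfinal iv k d1 q01 d2 q02 G" "path A w0 G"
    using trim A by blast
  moreover have "path A (x @ y') A"
    using x y' by (auto simp: path_append simp del: split_paired_Ex)
  ultimately obtain m where "prefix ((x @ y') @ w0) (concat (replicate m z))"
    using final_path_prefix_of_loop_power[OF A loop] by (meson path_append)
  then have "prefix (x @ y') (concat (replicate m z))"
    by (rule append_prefixD)
  moreover have "length (x @ y') = length (x @ y) * length z"
    unfolding xy' by simp
  ultimately have "x @ y' = concat (replicate (length (x @ y)) z)"
    using prefix_concat_replicate_eq loop(2) by blast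
  with y' show ?thesis by (rule that)
qed

lemma loop_run_covers_scc:
  assumes K: "nscc iv k d1 q01 F1 d2 q02 F2 K" "A \<in> K" "C \<in> K"
    and loop: "run A z ts A" "z \<noteq> []"
  shows "\<exists>r<length z. ts ! r = C"
proof -
  let ?E = "nedges iv k d1 q01 F1 d2 q02 F2"
  obtain S0 where "K = {T. state T \<and> (S0, T) \<in> ?E\<^sup>* \<and> (T, S0) \<in> ?E\<^sup>*}"
    using K(1) unfolding nscc_def by blast
  then have A: "state A" "(S0, A) \<in> ?E\<^sup>*" "(A, S0) \<in> ?E\<^sup>*"
    and C: "(S0, C) \<in> ?E\<^sup>*" "(C, S0) \<in> ?E\<^sup>*"
    using K(2,3) by auto
  obtain x y where x: "path A x C" and y: "path C y A"
    using path_of_rtrancl_edges rtrancl_trans A C by meson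
  have "path A z A"
    using loop(1) unfolding npath_def by blast
  then obtain y' where "path C y' A" "x @ y' = concat (replicate (length (x @ y)) z)"
    using loop_through_state_power A(1) loop(2) x y by blast
  then have "C = ts ! (length x mod length z)"
    using loop_power_state_eq[OF loop x] by blast
  with loop(2) show ?thesis
    by (metis length_greater_0_conv mod_less_divisor)
qed

lemma card_scc_le_card_loop_states:
  assumes "nscc iv k d1 q01 F1 d2 q02 F2 K" "A \<in> K" "run A z ts A" "z \<noteq> []"
  shows "card K \<le> card ((\<lambda>r. ts ! r) ` {..<length z})"
proof (rule card_mono)
  show "K \<subseteq> (\<lambda>r. ts ! r) ` {..<length z}"
    using loop_run_covers_scc assms by blast
qed simp

lemma card_scc_le_loop_length:
  assumes "nscc iv k d1 q01 F1 d2 q02 F2 K" "A \<in> K" "path A z A" "z \<noteq> []"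
  shows "card K \<le> length z"
proof -
  obtain ts where "run A z ts A"
    using assms(3) unfolding npath_def by blast
  with assms have "card K \<le> card ((\<lambda>r. ts ! r) ` {..<length z})"
    using card_scc_le_card_loop_states by blast
  also have "\<dots> \<le> length z"
    using card_image_le[of "{..<length z}"] by simp
  finally show ?thesis .
qed

lemma loop_run_inj_on:
  assumes "nscc iv k d1 q01 F1 d2 q02 F2 K" "A \<in> K" "run A z ts A" "z \<noteq> []"
    and "length z \<le> card K"
  shows "inj_on (\<lambda>r. ts ! r) {..<length z}"
proof (rule eq_card_imp_inj_on)
  have "card ((\<lambda>r. ts ! r) ` {..<length z}) \<le> length z"
    using card_image_le[of "{..<length z}"] by simp
  then show "card ((\<lambda>r. ts ! r) ` {..<length z}) = card {..<length z}"
    using card_scc_le_card_loop_states[OF assms(1-4)] assms(5) by simp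
qed simp

lemma short_loops_eq:
  assumes K: "nscc iv k d1 q01 F1 d2 q02 F2 K" "A \<in> K"
    and u: "path A u A" "u \<noteq> []" "length u \<le> card K"
    and v: "path A v A" "v \<noteq> []" "length v \<le> card K"
  shows "u = v"
proof -
  have "state A"
    using K unfolding nscc_def by blast
  then obtain G w0 where G: "nfinal iv k d1 q01 d2 q02 G" "path A w0 G"
    using trim by blast
  then have "path A (u @ w0) G"
    using u(1) by (auto simp: path_append simp del: split_paired_Ex)
  then obtain m where "prefix (u @ w0) (concat (replicate m v))"
    using final_path_prefix_of_loop_power[OF \<open>state A\<close> v(1,2) _ G(1)] by blast
  moreover have "length u = 1 * length v"
    using card_scc_le_loop_length[OF K u(1,2)] card_scc_le_loop_length[OF K v(1,2)] u(3) v(3)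
    by simp
  ultimately show ?thesis
    using prefix_concat_replicate_eq[OF append_prefixD] v(2) by fastforce
qed

end

theorem lemma6:
  fixes iv :: "'a::finite \<Rightarrow> 'a" and k :: nat
    and d1 :: "'q1::finite \<Rightarrow> 'a \<Rightarrow> 'q1" and q01 :: 'q1 and F1 :: "'q1 set"
    and d2 :: "'q2::finite \<Rightarrow> 'a \<Rightarrow> 'q2" and q02 :: 'q2 and F2 :: "'q2 set"
    and K :: "(('q1 \<times> 'q2) \<times> 'q1 \<times> 'q2 \<times> nat) set"
    and A F :: "('q1 \<times> 'q2) \<times> 'q1 \<times> 'q2 \<times> nat"
    and vA w :: "'a list"
    and ss :: "(('q1 \<times> 'q2) \<times> 'q1 \<times> 'q2 \<times> nat) list"
  assumes inv: "\<forall>a. iv (iv a) = a"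
    and k: "1 \<le> k"
    and reg: "regular (hairpin iv k (dlang d1 q01 F1) {u. wbar iv u \<in> dlang d2 q02 F2})"
    and trim: "\<forall>S. nstate iv k d1 q01 d2 q02 S \<longrightarrow>
                 (\<exists>I u. ninit iv k d1 q01 d2 q02 I \<and> npath iv k d1 q01 F1 d2 q02 F2 I u S) \<and>
                 (\<exists>G u. nfinal iv k d1 q01 d2 q02 G \<and> npath iv k d1 q01 F1 d2 q02 F2 S u G)"
    and scc: "nontrivial_scc iv k d1 q01 F1 d2 q02 F2 K"
    and AK: "A \<in> K"
    and loop: "nrun iv k d1 q01 F1 d2 q02 F2 A vA ss A"
    and loopK: "set ss \<subseteq> K"
    and len: "1 \<le> length vA" "length vA \<le> card K"
    and path: "npath iv k d1 q01 F1 d2 q02 F2 A w F"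
    and fin: "nfinal iv k d1 q01 d2 q02 F"
  shows "(\<exists>n\<ge>1. prefix w (concat (replicate n vA))) \<and>
         (\<forall>u. npath iv k d1 q01 F1 d2 q02 F2 A u A \<and> 1 \<le> length u \<and> length u \<le> card K
               \<longrightarrow> u = vA) \<and>
         (\<forall>B\<in>K. B \<noteq> A \<longrightarrow> (\<exists>!i. 0 < i \<and> i < length vA \<and> ss ! i = B)) \<and>
         length vA = card K"
proof -
  interpret regular_trim_hairpin iv k d1 q01 F1 d2 q02 F2
    using inv k reg trim by unfold_locales
  have K: "nscc iv k d1 q01 F1 d2 q02 F2 K"
    using scc by (simp add: nontrivial_scc_def)
  have A: "state A"
    using K AK unfolding nscc_def by blast
  have vA: "vA \<noteq> []" "path A vA A"
    using len(1) loop unfolding npath_def by auto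
  have inj: "inj_on (\<lambda>r. ss ! r) {..<length vA}"
    using loop_run_inj_on[OF K AK loop vA(1) len(2)] .
  have "ss ! 0 = A"
    using loop by (simp add: nrun_def)
  then have hamiltonian: "\<exists>!i. 0 < i \<and> i < length vA \<and> ss ! i = B" if "B \<in> K" "B \<noteq> A" for B
    using loop_run_covers_scc[OF K AK that(1) loop vA(1)] inj that(2)
    by (metis gr0I inj_onD lessThan_iff)
  have "u = vA" if "path A u A" "1 \<le> length u" "length u \<le> card K" for u
    using short_loops_eq[OF K AK that(1) _ that(3) vA(2,1) len(2)] that(2) by force
  moreover have "length vA = card K"
    using card_scc_le_loop_length[OF K AK vA(2,1)] len(2) by simp
  ultimately show ?thesis
    using final_path_prefix_of_loop_power[OF A vA(2,1) path fin] hamiltonian by blast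
qed

end
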